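(* Let $G=(\mathcal V,\mathcal E)$ be an undirected connected graph with $\mathcal V=\{1,\dots,n\}$ and $|\mathcal E|=m$, and consider $\dot x=f(x)$ on $\mathbb{R}^n$ with $f$ continuously differentiable, solutions defined for all $t\ge0$, and $f(x+c\mathbf{1}_n)=f(x)$ for all $x\in\mathbb{R}^n$, $c\in\mathbb{R}$. Let $v\in\mathcal I_{\mathcal E}$ and let $B_v$ be as below. The following are equivalent: (i) for every $x\in\mathbb{R}^n$ there exists $P(x)\in\mathbb{M}_m$ with $B_v^{\top}D_xf(x)=P(x)B_v^{\top}$; (ii) for every two trajectories $x(t),y(t)$ with $B_v^{\top}x(0)\le B_v^{\top}y(0)$ one has $B_v^{\top}x(t)\le B_v^{\top}y(t)$ for all $t\ge0$. Additionally, if (i) holds, $c\in\mathbb{R}$, and $\mathbf{e}\in\mathbb{R}^n$ satisfies $B_v^{\top}\mathbf{e}>0_m$, then the following are equivalent: (iii) $B_v^{\top}D_xf(x)\mathbf{e}\le -cB_v^{\top}\mathbf{e}$ for all $x\in\mathbb{R}^n$; (iv) for every two trajectories $x(t),y(t)$ and all $t\ge0$, $\|\mathrm{diag}(B_v^{\top}\mathbf{e})^{-1}(B_v^{\top}x(t)-B_v^{\top}y(t))\|_\infty\le e^{-ct}\|\mathrm{diag}(B_v^{\top}\mathbf{e})^{-1}(B_v^{\top}x(0)-B_v^{\top}y(0))\|_\infty$.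
   Context: $\mathcal I_{\mathcal E}=\{v\in\mathbb{R}^n: v_i\ne v_j\text{ for every edge }\{i,j\}\in\mathcal E\}$. For $v\in\mathcal I_{\mathcal E}$, $B_v\in\mathbb{R}^{n\times m}$ is the incidence matrix of $G$ for an orientation of the edges chosen so that $B_v^{\top}v>0_m$; an incidence matrix has one column per edge, with entry $+1$ at the tail node, $-1$ at the head node, and $0$ elsewhere (so $B_v^{\top}x$ is the vector of edge differences $x_i-x_j$). $\mathbb{M}_m$ is the set of $m\times m$ Metzler matrices (nonnegative off-diagonal entries). Inequalities between vectors are entrywise; $\mathbf 1_n$ is the all-ones vector. *)

theory Defs
  imports "HOL-Analysis.Analysis"
begin

text \<open>Vertices are the elements of a finite type 'n (so n = CARD('n)).
  An undirected graph is a symmetric irreflexive edge relation E on 'n.\<close>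

definition undirected_graph :: "('n \<times> 'n) set \<Rightarrow> bool" where
  "undirected_graph E \<longleftrightarrow> sym E \<and> (\<forall>i. (i, i) \<notin> E)"

definition connected_graph :: "('n \<times> 'n) set \<Rightarrow> bool" where
  "connected_graph E \<longleftrightarrow> (\<forall>i j. (i, j) \<in> E\<^sup>*)"

definition I_E :: "('n \<times> 'n) set \<Rightarrow> (real ^ 'n) set" where
  "I_E E = {v. \<forall>(i, j) \<in> E. v $ i \<noteq> v $ j}"

text \<open>Oriented edges for v: each undirected edge {i,j} oriented from tail i to head j
  with v_i > v_j, so that B_v^T v > 0. These index the m columns of B_v.\<close>
definition oriented_edges :: "('n \<times> 'n) set \<Rightarrow> real ^ 'n \<Rightarrow> ('n \<times> 'n) set" where
  "oriented_edges E v = {(i, j). (i, j) \<in> E \<and> v $ i > v $ j}"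

text \<open>Incidence matrix entry (row k, column = oriented edge (i,j)).\<close>
definition incidence :: "'n \<Rightarrow> ('n \<times> 'n) \<Rightarrow> real" where
  "incidence k e = (if k = fst e then 1 else if k = snd e then -1 else 0)"

definition Bt :: "real ^ 'n \<Rightarrow> ('n \<times> 'n) \<Rightarrow> real" where
  "Bt x e = (\<Sum>k\<in>UNIV. incidence k e * x $ k)"

definition metzler_on :: "'e set \<Rightarrow> ('e \<Rightarrow> 'e \<Rightarrow> real) \<Rightarrow> bool" where
  "metzler_on M P \<longleftrightarrow> (\<forall>a\<in>M. \<forall>b\<in>M. a \<noteq> b \<longrightarrow> P a b \<ge> 0)"

definition trajectory :: "(real ^ 'n \<Rightarrow> real ^ 'n) \<Rightarrow> (real \<Rightarrow> real ^ 'n) \<Rightarrow> bool" where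
  "trajectory f x \<longleftrightarrow> (\<forall>t\<ge>0. (x has_vector_derivative f (x t)) (at t within {0..}))"

definition infnorm_on :: "'e set \<Rightarrow> ('e \<Rightarrow> real) \<Rightarrow> real" where
  "infnorm_on M w = Max (insert 0 ((\<lambda>a. \<bar>w a\<bar>) ` M))"

end

theory Submission
  imports Defs
begin

text \<open>Write \<open>z = B\<^sup>T (x - y)\<close> for the edge differences of two trajectories. By the mean value
  theorem each component satisfies \<open>z\<^sub>b' = (B\<^sup>T J(\<xi>) (x - y))\<^sub>b = (P(\<xi>) z)\<^sub>b\<close> for a point \<open>\<xi>\<close> on the
  segment between \<open>y\<close> and \<open>x\<close>, so when \<open>z\<close> lies below a bound \<open>r(t) B\<^sup>T w\<close> and touches it at edge
  \<open>b\<close>, the Metzler row \<open>P(\<xi>)\<^sub>b\<close> gives \<open>z\<^sub>b' \<le> r(t) (B\<^sup>T J(\<xi>) w)\<^sub>b\<close>. If the bound grows faster than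
  that, a first-touching-time argument keeps \<open>z\<close> strictly below it. For (i) \<Rightarrow> (ii) the bound is
  \<open>\<epsilon> exp(K t) B\<^sup>T v\<close>, with \<open>K\<close> dominating \<open>B\<^sup>T J(\<xi>) v\<close> on a compact set by continuity of \<open>J\<close>;
  for (iii) \<Rightarrow> (iv) it is \<open>(D + \<epsilon>) exp((\<epsilon> - c) t) B\<^sup>T e\<close>. Letting \<open>\<epsilon> \<rightarrow> 0\<close> gives the claims.
  Conversely, comparing the trajectories from \<open>x\<close> and \<open>x + h w\<close> at \<open>t = 0\<close> and then letting
  \<open>h \<rightarrow> 0\<close> yields sign conditions on \<open>B\<^sup>T J(x) w\<close>; for (ii) \<Rightarrow> (i) Farkas' lemma turns them into
  the rows of a Metzler \<open>P\<close>.
  Only the edges oriented by \<open>v\<close> enter.\<close>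

section \<open>A comparison principle\<close>

lemma DERIV_nonneg_at_left_min:
  assumes "(g has_real_derivative D) (at 0 within {0..})" "\<And>t. 0 < t \<Longrightarrow> g 0 \<le> g t"
  shows "0 \<le> D"
proof -
  have "((\<lambda>t. (g t - g 0) / (t - 0)) \<longlongrightarrow> D) (at_right 0)"
    using assms(1) by (simp add: has_field_derivative_iff at_within_Ici_at_right)
  moreover have "eventually (\<lambda>t. 0 \<le> (g t - g 0) / (t - 0)) (at_right 0)"
    using eventually_at_right_less by (rule eventually_mono) (simp add: assms(2))
  ultimately show ?thesis by (rule tendsto_lowerbound) simp
qed

lemma DERIV_nonpos_at_first_zero:
  fixes q :: "real \<Rightarrow> real"
  assumes "0 < s" "(q has_real_derivative D) (at s within {0..})" "q s \<le> 0"
    and pos: "\<And>y. 0 \<le> y \<Longrightarrow> y < s \<Longrightarrow> 0 < q y"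
  shows "D \<le> 0"
proof -
  have "(q has_real_derivative D) (at s within {0..s})"
    using assms(2) by (rule DERIV_subset) auto
  then have "((\<lambda>y. (q y - q s) / (y - s)) \<longlongrightarrow> D) (at_left s)"
    by (simp add: has_field_derivative_iff at_within_Icc_at_left[OF assms(1)])
  moreover have "eventually (\<lambda>y. (q y - q s) / (y - s) \<le> 0) (at_left s)"
    using eventually_at_left_real[OF assms(1)]
  proof (rule eventually_mono)
    fix y assume "y \<in> {0<..<s}"
    with pos[of y] assms(3) show "(q y - q s) / (y - s) \<le> 0"
      by (intro divide_nonneg_neg) auto
  qed
  ultimately show ?thesis by (rule tendsto_upperbound) simp
qed

lemma nonneg_at_first_zero:
  fixes q :: "real \<Rightarrow> real"
  assumes "0 < s" "continuous (at s within {0..}) q" and pos: "\<And>y. 0 \<le> y \<Longrightarrow> y < s \<Longrightarrow> 0 < q y"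
  shows "0 \<le> q s"
proof -
  have "continuous (at s within {0..s}) q"
    using assms(2) by (rule continuous_within_subset) auto
  then have "(q \<longlongrightarrow> q s) (at_left s)"
    by (simp add: continuous_within at_within_Icc_at_left[OF assms(1)])
  moreover have "eventually (\<lambda>y. 0 \<le> q y) (at_left s)"
    using eventually_at_left_real[OF assms(1)] by (rule eventually_mono) (auto intro: less_imp_le pos)
  ultimately show ?thesis by (rule tendsto_lowerbound) simp
qed

text \<open>Consider the first time at which some \<open>q a\<close> vanishes.\<close>

lemma positivity_persists:
  fixes q q' :: "'e \<Rightarrow> real \<Rightarrow> real"
  assumes "finite M"
    and der: "\<And>a t. a \<in> M \<Longrightarrow> t \<in> {0..T} \<Longrightarrow> (q a has_real_derivative q' a t) (at t within {0..})"
    and init: "\<And>a. a \<in> M \<Longrightarrow> 0 < q a 0"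
    and boundary: "\<And>a t. a \<in> M \<Longrightarrow> t \<in> {0..T} \<Longrightarrow> \<forall>b\<in>M. 0 \<le> q b t \<Longrightarrow> q a t = 0 \<Longrightarrow> 0 < q' a t"
    and "a \<in> M" "t \<in> {0..T}"
  shows "0 < q a t"
proof (rule ccontr)
  assume "\<not> 0 < q a t"
  define S where "S = (\<Union>b\<in>M. {0..T} \<inter> q b -` {..0})"
  have cont: "continuous (at t within {0..}) (q b)" if "b \<in> M" "t \<in> {0..T}" for b t
    using der[OF that] by (rule DERIV_continuous)
  have "continuous_on {0..T} (q b)" if "b \<in> M" for b
    unfolding continuous_on_eq_continuous_within
  proof
    fix t assume "t \<in> {0..T}"
    from cont[OF that this] show "continuous (at t within {0..T}) (q b)"
      by (rule continuous_within_subset) auto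
  qed
  then have "closed S"
    unfolding S_def using \<open>finite M\<close> by (intro closed_UN ballI continuous_closed_preimage) auto
  moreover have "t \<in> S" "bdd_below S"
    using \<open>\<not> 0 < q a t\<close> \<open>a \<in> M\<close> \<open>t \<in> {0..T}\<close> unfolding S_def
    by (auto simp: not_less intro: bdd_belowI[of _ 0])
  ultimately have "Inf S \<in> S"
    by (intro closed_contains_Inf) auto
  then obtain a0 where a0: "a0 \<in> M" "q a0 (Inf S) \<le> 0" and s: "Inf S \<in> {0..T}"
    unfolding S_def by auto
  have before: "0 < q b y" if "b \<in> M" "0 \<le> y" "y < Inf S" for b y
  proof (rule ccontr)
    assume "\<not> 0 < q b y"
    then have "y \<in> S" using that s unfolding S_def by (auto simp: not_less)
    with \<open>bdd_below S\<close> that(3) show False by (meson cInf_lower not_less)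
  qed
  have "Inf S \<noteq> 0" using a0 init by force
  with s have "0 < Inf S" by simp
  have "0 \<le> q b (Inf S)" if "b \<in> M" for b
    using \<open>0 < Inf S\<close> cont[OF that s] by (rule nonneg_at_first_zero) (use before that in auto)
  with a0 have "0 < q' a0 (Inf S)"
    by (intro boundary s) (auto intro: antisym)
  moreover have "q' a0 (Inf S) \<le> 0"
    using \<open>0 < Inf S\<close> der[OF a0(1) s] a0(2) by (rule DERIV_nonpos_at_first_zero) (use before a0 in auto)
  ultimately show False by simp
qed

lemma le_of_forall_less_at_right_0:
  fixes g :: "real \<Rightarrow> real"
  assumes "(g \<longlongrightarrow> L) (at_right 0)" "\<And>\<epsilon>. 0 < \<epsilon> \<Longrightarrow> x < g \<epsilon>"
  shows "x \<le> L"
proof -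
  have "eventually (\<lambda>\<epsilon>. x \<le> g \<epsilon>) (at_right 0)"
    using eventually_at_right_less by (rule eventually_mono) (auto intro: less_imp_le assms(2))
  with assms(1) show ?thesis by (rule tendsto_lowerbound) simp
qed

section \<open>Farkas' lemma\<close>

lemma convex_cone_hull_finite_image:
  fixes g :: "'i \<Rightarrow> 'a::real_vector"
  assumes "finite I" "x \<in> convex_cone hull (g ` I)"
  shows "\<exists>l. (\<forall>i\<in>I. 0 \<le> l i) \<and> x = (\<Sum>i\<in>I. l i *\<^sub>R g i)"
proof -
  define K where "K = {y. \<exists>l. (\<forall>i\<in>I. 0 \<le> l i) \<and> y = (\<Sum>i\<in>I. l i *\<^sub>R g i)}"
  have "g i \<in> K" if "i \<in> I" for i
    unfolding K_def using that \<open>finite I\<close>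
    by (intro CollectI exI[of _ "\<lambda>j. if j = i then 1 else 0"])
      (simp add: if_distrib[of "\<lambda>c. c *\<^sub>R _"] sum.delta cong: if_cong)
  moreover have "convex_cone K"
    unfolding convex_cone_iff
  proof (intro conjI ballI allI impI)
    show "0 \<in> K"
      unfolding K_def by (intro CollectI exI[of _ "\<lambda>_. 0"]) simp
  next
    fix x y assume "x \<in> K" "y \<in> K"
    then obtain l m where "\<forall>i\<in>I. 0 \<le> l i" "x = (\<Sum>i\<in>I. l i *\<^sub>R g i)"
      "\<forall>i\<in>I. 0 \<le> m i" "y = (\<Sum>i\<in>I. m i *\<^sub>R g i)"
      unfolding K_def by blast
    then show "x + y \<in> K"
      unfolding K_def by (intro CollectI exI[of _ "\<lambda>i. l i + m i"]) (simp add: scaleR_add_left sum.distrib)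
  next
    fix x and c :: real assume "x \<in> K" "0 \<le> c"
    then obtain l where "\<forall>i\<in>I. 0 \<le> l i" "x = (\<Sum>i\<in>I. l i *\<^sub>R g i)"
      unfolding K_def by blast
    with \<open>0 \<le> c\<close> show "c *\<^sub>R x \<in> K"
      unfolding K_def by (intro CollectI exI[of _ "\<lambda>i. c * l i"]) (simp add: scaleR_sum_right)
  qed
  ultimately have "convex_cone hull (g ` I) \<subseteq> K"
    by (intro hull_minimal) auto
  with assms(2) show ?thesis unfolding K_def by blast
qed

lemma farkas_lemma:
  fixes g :: "'i \<Rightarrow> 'a::euclidean_space"
  assumes "finite I" and dual: "\<And>u. \<forall>i\<in>I. 0 \<le> u \<bullet> g i \<Longrightarrow> 0 \<le> u \<bullet> r"
  shows "\<exists>l. (\<forall>i\<in>I. 0 \<le> l i) \<and> r = (\<Sum>i\<in>I. l i *\<^sub>R g i)"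
proof -
  define K where "K = convex_cone hull (g ` I)"
  have "r \<in> K"
  proof (rule ccontr)
    assume "r \<notin> K"
    moreover have "convex K" "closed K"
      unfolding K_def using \<open>finite I\<close> by (simp_all add: convex_convex_cone_hull closed_convex_cone_hull)
    ultimately obtain u \<beta> where u: "u \<bullet> r < \<beta>" "\<forall>x\<in>K. \<beta> < u \<bullet> x"
      using separating_hyperplane_closed_point by blast
    have "\<beta> < 0" using u(2) convex_cone_hull_contains_0[of "g ` I"] by (force simp: K_def)
    have "0 \<le> u \<bullet> g i" if "i \<in> I" for i
    proof (rule ccontr)
      assume "\<not> 0 \<le> u \<bullet> g i"
      then have "(\<beta> / (u \<bullet> g i)) *\<^sub>R g i \<in> K"
        unfolding K_def using \<open>\<beta> < 0\<close> that
        by (intro convex_cone_hull_mul hull_inc) (auto simp: divide_nonpos_neg)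
      with u(2) \<open>\<not> 0 \<le> u \<bullet> g i\<close> show False by force
    qed
    with dual u(1) \<open>\<beta> < 0\<close> show False by force
  qed
  then show ?thesis unfolding K_def by (rule convex_cone_hull_finite_image[OF \<open>finite I\<close>])
qed

section \<open>The incidence matrix\<close>

definition incidence_column :: "'n::finite \<times> 'n \<Rightarrow> real ^ 'n" where
  "incidence_column a = (\<chi> k. incidence k a)"

lemma Bt_eq_inner: "Bt x a = incidence_column a \<bullet> x"
  by (simp add: Bt_def incidence_column_def inner_vec_def)

lemma Bt_add: "Bt (x + y) a = Bt x a + Bt y a"
  by (simp add: Bt_eq_inner inner_add_right)

lemma Bt_diff: "Bt (x - y) a = Bt x a - Bt y a"
  by (simp add: Bt_eq_inner inner_diff_right)

lemma Bt_scaleR: "Bt (c *\<^sub>R x) a = c * Bt x a"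
  by (simp add: Bt_eq_inner)

lemma bounded_linear_Bt: "bounded_linear (\<lambda>x. Bt x a)"
  unfolding Bt_eq_inner by (rule bounded_linear_inner_right)

lemma Bt_pair:
  assumes "i \<noteq> j"
  shows "Bt x (i, j) = x $ i - x $ j"
proof -
  have "Bt x (i, j) = (\<Sum>k\<in>UNIV. (if k = i then x $ i else 0) + (if k = j then - x $ j else 0))"
    unfolding Bt_def by (rule sum.cong) (use assms in \<open>auto simp: incidence_def\<close>)
  then show ?thesis by (simp add: sum.distrib)
qed

lemma Bt_oriented_edges_pos:
  assumes "a \<in> oriented_edges E v"
  shows "0 < Bt v a"
proof -
  obtain i j where a: "a = (i, j)" and v: "v $ j < v $ i"
    using assms by (auto simp: oriented_edges_def)
  then have "i \<noteq> j" by auto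
  with a v show ?thesis by (simp add: Bt_pair)
qed

lemma Bt_matrix_vector_mult: "Bt (A *v x) a = (incidence_column a v* A) \<bullet> x"
  by (simp add: Bt_eq_inner dot_lmul_matrix)

text \<open>The paper's condition \<open>B\<^sup>T A = P B\<^sup>T\<close> with \<open>P\<close> Metzler, for the rows and columns indexed by \<open>M\<close>.\<close>

definition edge_metzler :: "('n::finite \<times> 'n) set \<Rightarrow> real ^ 'n ^ 'n \<Rightarrow> bool" where
  "edge_metzler M A \<longleftrightarrow> (\<exists>P. metzler_on M P \<and>
     (\<forall>a\<in>M. \<forall>k. (\<Sum>i\<in>UNIV. incidence i a * A $ i $ k) = (\<Sum>b\<in>M. P a b * incidence k b)))"

lemma intertwining_iff:
  "(\<forall>k. (\<Sum>i\<in>UNIV. incidence i a * A $ i $ k) = (\<Sum>b\<in>M. P a b * incidence k b)) \<longleftrightarrow>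
   incidence_column a v* A = (\<Sum>b\<in>M. P a b *\<^sub>R incidence_column b)"
  by (simp add: vec_eq_iff vector_matrix_mult_def incidence_column_def mult.commute)

lemma Bt_matrix_vector_mult_intertwined:
  assumes "incidence_column a v* A = (\<Sum>b\<in>M. p b *\<^sub>R incidence_column b)"
  shows "Bt (A *v x) a = (\<Sum>b\<in>M. p b * Bt x b)"
  unfolding Bt_matrix_vector_mult assms by (simp add: inner_sum_left Bt_eq_inner)

lemma combination_of_incidence_columns:
  fixes r :: "real ^ 'n::finite"
  assumes "a \<in> M" and dual: "\<And>u. \<forall>b\<in>M. 0 \<le> Bt u b \<Longrightarrow> Bt u a = 0 \<Longrightarrow> 0 \<le> r \<bullet> u"
  shows "\<exists>p. (\<forall>b\<in>M. b \<noteq> a \<longrightarrow> 0 \<le> p b) \<and> r = (\<Sum>b\<in>M. p b *\<^sub>R incidence_column b)"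
proof -
  \<comment> \<open>the extra generator \<open>-\<beta>\<^sub>a\<close> leaves the sign of the coefficient at \<open>a\<close> free\<close>
  define g where "g = case_option (- incidence_column a) incidence_column"
  have "\<exists>l. (\<forall>i\<in>insert None (Some ` M). 0 \<le> l i) \<and> r = (\<Sum>i\<in>insert None (Some ` M). l i *\<^sub>R g i)"
  proof (rule farkas_lemma)
    fix u assume "\<forall>i\<in>insert None (Some ` M). 0 \<le> u \<bullet> g i"
    then have "\<forall>b\<in>M. 0 \<le> Bt u b" "Bt u a \<le> 0"
      by (auto simp: g_def Bt_eq_inner inner_commute)
    with \<open>a \<in> M\<close> have "0 \<le> r \<bullet> u"
      by (intro dual) auto
    then show "0 \<le> u \<bullet> r"
      by (simp add: inner_commute)
  qed simp
  then obtain l where l: "\<forall>i\<in>insert None (Some ` M). 0 \<le> l i"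
    and r: "r = (\<Sum>i\<in>insert None (Some ` M). l i *\<^sub>R g i)" by blast
  define p where "p b = l (Some b) - (if b = a then l None else 0)" for b
  have "(\<Sum>b\<in>M. (if b = a then l None else 0) *\<^sub>R incidence_column b) = l None *\<^sub>R incidence_column a"
    using \<open>a \<in> M\<close> by (simp add: if_distrib[of "\<lambda>c. c *\<^sub>R _"] cong: if_cong)
  then have "(\<Sum>b\<in>M. p b *\<^sub>R incidence_column b)
      = (\<Sum>b\<in>M. l (Some b) *\<^sub>R incidence_column b) - l None *\<^sub>R incidence_column a"
    by (simp add: p_def scaleR_left_diff_distrib sum_subtractf)
  also have "\<dots> = r"
    by (simp add: r g_def sum.reindex)
  finally have "r = (\<Sum>b\<in>M. p b *\<^sub>R incidence_column b)" by (rule sym)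
  moreover have "\<forall>b\<in>M. b \<noteq> a \<longrightarrow> 0 \<le> p b"
    using l by (simp add: p_def)
  ultimately show ?thesis by (intro exI[of _ p] conjI)
qed

lemma edge_metzlerI:
  assumes "\<And>a w. a \<in> M \<Longrightarrow> \<forall>b\<in>M. 0 \<le> Bt w b \<Longrightarrow> Bt w a = 0 \<Longrightarrow> 0 \<le> Bt (A *v w) a"
  shows "edge_metzler M A"
proof -
  have "\<forall>a\<in>M. \<exists>p. (\<forall>b\<in>M. b \<noteq> a \<longrightarrow> 0 \<le> p b) \<and>
      incidence_column a v* A = (\<Sum>b\<in>M. p b *\<^sub>R incidence_column b)"
  proof
    fix a assume "a \<in> M"
    show "\<exists>p. (\<forall>b\<in>M. b \<noteq> a \<longrightarrow> 0 \<le> p b) \<and>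
        incidence_column a v* A = (\<Sum>b\<in>M. p b *\<^sub>R incidence_column b)"
    proof (rule combination_of_incidence_columns[OF \<open>a \<in> M\<close>])
      fix u assume "\<forall>b\<in>M. 0 \<le> Bt u b" "Bt u a = 0"
      with assms[OF \<open>a \<in> M\<close>] show "0 \<le> (incidence_column a v* A) \<bullet> u"
        by (simp add: Bt_matrix_vector_mult)
    qed
  qed
  from bchoice[OF this] obtain P where P: "\<forall>a\<in>M. (\<forall>b\<in>M. b \<noteq> a \<longrightarrow> 0 \<le> P a b) \<and>
      incidence_column a v* A = (\<Sum>b\<in>M. P a b *\<^sub>R incidence_column b)"
    by (elim exE)
  then have "metzler_on M P"
    by (auto simp: metzler_on_def)
  with P show ?thesis
    unfolding edge_metzler_def by (intro exI[of _ P]) (simp add: intertwining_iff)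
qed

section \<open>Edge-monotone and edge-contracting systems\<close>

definition edge_monotone :: "('n::finite \<times> 'n) set \<Rightarrow> (real ^ 'n \<Rightarrow> real ^ 'n) \<Rightarrow> bool" where
  "edge_monotone M f \<longleftrightarrow> (\<forall>x y. trajectory f x \<longrightarrow> trajectory f y \<longrightarrow>
     (\<forall>a\<in>M. Bt (x 0) a \<le> Bt (y 0) a) \<longrightarrow> (\<forall>t\<ge>0. \<forall>a\<in>M. Bt (x t) a \<le> Bt (y t) a))"

definition edge_dist :: "('n::finite \<times> 'n) set \<Rightarrow> real ^ 'n \<Rightarrow> real ^ 'n \<Rightarrow> real ^ 'n \<Rightarrow> real" where
  "edge_dist M e x y = infnorm_on M (\<lambda>a. (Bt x a - Bt y a) / Bt e a)"

definition edge_contracting ::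
    "('n::finite \<times> 'n) set \<Rightarrow> real ^ 'n \<Rightarrow> real \<Rightarrow> (real ^ 'n \<Rightarrow> real ^ 'n) \<Rightarrow> bool" where
  "edge_contracting M e c f \<longleftrightarrow> (\<forall>x y. trajectory f x \<longrightarrow> trajectory f y \<longrightarrow>
     (\<forall>t\<ge>0. edge_dist M e (x t) (y t) \<le> exp (- c * t) * edge_dist M e (x 0) (y 0)))"

lemma infnorm_on_nonneg: "finite M \<Longrightarrow> 0 \<le> infnorm_on M w"
  unfolding infnorm_on_def by (rule Max_ge) auto

lemma abs_le_infnorm_on:
  assumes "finite M" "a \<in> M"
  shows "\<bar>w a\<bar> \<le> infnorm_on M w"
  unfolding infnorm_on_def by (rule Max_ge) (use assms in auto)

lemma infnorm_on_le:
  assumes "finite M" "0 \<le> B" "\<And>a. a \<in> M \<Longrightarrow> \<bar>w a\<bar> \<le> B"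
  shows "infnorm_on M w \<le> B"
  unfolding infnorm_on_def by (rule Max.boundedI) (use assms in auto)

lemma edge_dist_bound:
  assumes "a \<in> M" "0 < Bt e a"
  shows "\<bar>Bt x a - Bt y a\<bar> \<le> edge_dist M e x y * Bt e a"
proof -
  have "\<bar>(Bt x a - Bt y a) / Bt e a\<bar> \<le> edge_dist M e x y"
    unfolding edge_dist_def using assms(1) by (rule abs_le_infnorm_on[OF finite])
  with assms(2) show ?thesis by (simp add: pos_divide_le_eq)
qed

lemma edge_dist_le:
  assumes "0 \<le> B" "\<And>a. a \<in> M \<Longrightarrow> 0 < Bt e a" "\<And>a. a \<in> M \<Longrightarrow> \<bar>Bt x a - Bt y a\<bar> \<le> B * Bt e a"
  shows "edge_dist M e x y \<le> B"
  unfolding edge_dist_def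
proof (rule infnorm_on_le[OF finite \<open>0 \<le> B\<close>])
  fix a assume a: "a \<in> M"
  then have "0 < Bt e a" by (rule assms(2))
  with assms(3)[OF a] show "\<bar>(Bt x a - Bt y a) / Bt e a\<bar> \<le> B"
    by (simp add: abs_divide pos_divide_le_eq)
qed

section \<open>Edge differences along trajectories\<close>

lemma trajectory_Bt_derivative:
  assumes "trajectory f x" "0 \<le> t"
  shows "((\<lambda>t. Bt (x t) a) has_real_derivative Bt (f (x t)) a) (at t within {0..})"
proof -
  have "(x has_vector_derivative f (x t)) (at t within {0..})"
    using assms by (simp add: trajectory_def)
  from bounded_linear.has_vector_derivative[OF bounded_linear_Bt this]
  show ?thesis by (simp add: has_real_derivative_iff_has_vector_derivative)
qed

lemma trajectory_continuous_on: "trajectory f x \<Longrightarrow> continuous_on {0..} x"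
  unfolding trajectory_def continuous_on_eq_continuous_within
  by (auto intro: has_vector_derivative_continuous)

lemma Bt_has_derivative_along_line:
  assumes deriv: "\<And>x. (f has_derivative (\<lambda>h. J x *v h)) (at x)"
  shows "((\<lambda>h. Bt (f (x + h *\<^sub>R w)) a) has_real_derivative Bt (J (x + h *\<^sub>R w) *v w) a) (at h within S)"
proof -
  have "((\<lambda>h. x + h *\<^sub>R w) has_derivative (\<lambda>k. k *\<^sub>R w)) (at h within S)"
    by (auto intro!: derivative_eq_intros)
  from has_derivative_compose[OF this deriv]
  have "((\<lambda>h. f (x + h *\<^sub>R w)) has_derivative (\<lambda>k. J (x + h *\<^sub>R w) *v (k *\<^sub>R w))) (at h within S)" .
  from bounded_linear.has_derivative[OF bounded_linear_Bt this, of a] show ?thesis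
    unfolding has_field_derivative_def
    by (rule has_derivative_eq_rhs) (auto simp: matrix_vector_mult_scaleR Bt_scaleR mult.commute)
qed

lemma Bt_mean_value:
  assumes deriv: "\<And>x. (f has_derivative (\<lambda>h. J x *v h)) (at x)"
  obtains s where "s \<in> {0..1}" "Bt (f q) a - Bt (f p) a = Bt (J (p + s *\<^sub>R (q - p)) *v (q - p)) a"
proof -
  have "\<exists>s\<in>{0<..<1}. Bt (f (p + 1 *\<^sub>R (q - p))) a - Bt (f (p + 0 *\<^sub>R (q - p))) a
      = Bt (J (p + s *\<^sub>R (q - p)) *v (q - p)) a * (1 - 0)"
    by (rule mvt_simple) (use Bt_has_derivative_along_line[OF deriv] in \<open>auto simp: has_field_derivative_def\<close>)
  then obtain s where "s \<in> {0<..<1}"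
    and "Bt (f (p + 1 *\<^sub>R (q - p))) a - Bt (f (p + 0 *\<^sub>R (q - p))) a
      = Bt (J (p + s *\<^sub>R (q - p)) *v (q - p)) a * (1 - 0)"
    by blast
  then show ?thesis by (intro that[of s]) auto
qed

lemma metzler_row_le:
  fixes P :: "'e \<Rightarrow> 'e \<Rightarrow> real"
  assumes "a \<in> M" "\<forall>b\<in>M. b \<noteq> a \<longrightarrow> 0 \<le> P a b" "\<forall>b\<in>M. z b \<le> r * d b" "z a = r * d a"
  shows "(\<Sum>b\<in>M. P a b * z b) \<le> r * (\<Sum>b\<in>M. P a b * d b)"
proof -
  have "0 \<le> P a b * (r * d b - z b)" if "b \<in> M" for b
    using assms that by (cases "b = a") auto
  then have "0 \<le> (\<Sum>b\<in>M. P a b * (r * d b - z b))"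
    by (rule sum_nonneg)
  then show ?thesis by (simp add: sum_distrib_left sum_subtractf algebra_simps)
qed

lemma edge_metzler_slope_le:
  assumes deriv: "\<And>x. (f has_derivative (\<lambda>h. J x *v h)) (at x)"
    and metz: "\<And>x. edge_metzler M (J x)" and b: "b \<in> M"
    and below: "\<forall>c\<in>M. Bt q c - Bt p c \<le> r * Bt w c" and touch: "Bt q b - Bt p b = r * Bt w b"
  obtains s where "s \<in> {0..1}" "Bt (f q) b - Bt (f p) b \<le> r * Bt (J (p + s *\<^sub>R (q - p)) *v w) b"
proof -
  obtain s where s: "s \<in> {0..1}"
    and mvt: "Bt (f q) b - Bt (f p) b = Bt (J (p + s *\<^sub>R (q - p)) *v (q - p)) b"
    using Bt_mean_value[OF deriv] .
  obtain P where P: "metzler_on M P"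
    and row: "incidence_column b v* J (p + s *\<^sub>R (q - p)) = (\<Sum>c\<in>M. P b c *\<^sub>R incidence_column c)"
    using metz[of "p + s *\<^sub>R (q - p)"] b unfolding edge_metzler_def intertwining_iff by blast
  have "(\<Sum>c\<in>M. P b c * Bt (q - p) c) \<le> r * (\<Sum>c\<in>M. P b c * Bt w c)"
    using P b below touch by (intro metzler_row_le) (auto simp: metzler_on_def Bt_diff)
  then show ?thesis
    using s mvt Bt_matrix_vector_mult_intertwined[OF row] by (intro that) auto
qed

lemma edge_difference_bound:
  assumes deriv: "\<And>x. (f has_derivative (\<lambda>h. J x *v h)) (at x)"
    and metz: "\<And>x. edge_metzler M (J x)"
    and X: "trajectory f X" and Y: "trajectory f Y"
    and r: "\<And>t. t \<in> {0..T} \<Longrightarrow> (r has_real_derivative r' t) (at t within {0..})"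
    and init: "\<And>b. b \<in> M \<Longrightarrow> Bt (X 0) b - Bt (Y 0) b < r 0 * Bt w b"
    and growth: "\<And>t \<xi> b. t \<in> {0..T} \<Longrightarrow> \<xi> \<in> closed_segment (Y t) (X t) \<Longrightarrow> b \<in> M \<Longrightarrow>
                   r t * Bt (J \<xi> *v w) b < r' t * Bt w b"
    and "a \<in> M" "t \<in> {0..T}"
  shows "Bt (X t) a - Bt (Y t) a < r t * Bt w a"
proof -
  define q where "q b t = r t * Bt w b - (Bt (X t) b - Bt (Y t) b)" for b t
  define q' where "q' b t = r' t * Bt w b - (Bt (f (X t)) b - Bt (f (Y t)) b)" for b t
  have der: "(q b has_real_derivative q' b t) (at t within {0..})" if "t \<in> {0..T}" for b t
    unfolding q_def q'_def
    by (intro derivative_eq_intros)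
      (use that in \<open>auto intro: r trajectory_Bt_derivative[OF X] trajectory_Bt_derivative[OF Y]\<close>)
  have boundary: "0 < q' b t"
    if b: "b \<in> M" and t: "t \<in> {0..T}" and nonneg: "\<forall>c\<in>M. 0 \<le> q c t" and zero: "q b t = 0"
    for b t
  proof -
    have "\<forall>c\<in>M. Bt (X t) c - Bt (Y t) c \<le> r t * Bt w c" "Bt (X t) b - Bt (Y t) b = r t * Bt w b"
      using nonneg zero by (auto simp: q_def)
    then obtain s where s: "s \<in> {0..1}"
      and slope: "Bt (f (X t)) b - Bt (f (Y t)) b \<le> r t * Bt (J (Y t + s *\<^sub>R (X t - Y t)) *v w) b"
      by (rule edge_metzler_slope_le[OF deriv metz b])
    have "Y t + s *\<^sub>R (X t - Y t) \<in> closed_segment (Y t) (X t)"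
      using s by (auto simp: in_segment algebra_simps intro!: exI[of _ s])
    from growth[OF t this b] slope show ?thesis
      unfolding q'_def by linarith
  qed
  have "0 < q a t"
    by (rule positivity_persists[of M T q q']) (use der init boundary assms in \<open>auto simp: q_def\<close>)
  then show ?thesis by (simp add: q_def)
qed

lemma compact_edge_rate_bound:
  fixes J :: "real ^ 'n \<Rightarrow> real ^ 'n ^ 'n" and w :: "real ^ 'n::finite"
  assumes "compact C" "continuous_on C J" "\<And>b. b \<in> M \<Longrightarrow> 0 < Bt w b"
  obtains K where "\<And>\<xi> b. \<xi> \<in> C \<Longrightarrow> b \<in> M \<Longrightarrow> Bt (J \<xi> *v w) b < K * Bt w b"
proof -
  define \<phi> :: "real ^ 'n \<Rightarrow> real ^ ('n \<times> 'n)" where "\<phi> \<xi> = (\<chi> b. Bt (J \<xi> *v w) b / Bt w b)" for \<xi>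
  have "continuous_on C \<phi>"
    unfolding \<phi>_def Bt_matrix_vector_mult vector_matrix_mult_def inner_vec_def divide_inverse
    using assms(2) by (intro continuous_intros continuous_on_vec_lambda)
  then have "bounded (\<phi> ` C)"
    using assms(1) by (intro compact_imp_bounded compact_continuous_image)
  then obtain B where B: "\<And>\<xi>. \<xi> \<in> C \<Longrightarrow> norm (\<phi> \<xi>) \<le> B"
    by (auto simp: bounded_iff)
  show ?thesis
  proof (rule that)
    fix \<xi> b assume "\<xi> \<in> C" "b \<in> M"
    have "\<phi> \<xi> $ b \<le> norm (\<phi> \<xi>)"
      using component_le_norm_cart[of "\<phi> \<xi>" b] by linarith
    then have "Bt (J \<xi> *v w) b / Bt w b \<le> norm (\<phi> \<xi>)"
      by (simp add: \<phi>_def)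
    with B[OF \<open>\<xi> \<in> C\<close>] have "Bt (J \<xi> *v w) b / Bt w b < B + 1" by simp
    with assms(3)[OF \<open>b \<in> M\<close>] show "Bt (J \<xi> *v w) b < (B + 1) * Bt w b"
      by (simp add: pos_divide_less_eq)
  qed
qed

section \<open>The four implications\<close>

lemma edge_monotone_if_edge_metzler:
  assumes deriv: "\<And>x. (f has_derivative (\<lambda>h. J x *v h)) (at x)"
    and C1: "continuous_on UNIV J"
    and d: "\<And>a. a \<in> M \<Longrightarrow> 0 < Bt d a"
    and metz: "\<And>x. edge_metzler M (J x)"
  shows "edge_monotone M f"
  unfolding edge_monotone_def
proof (intro allI impI ballI)
  fix X Y and T :: real and a
  assume X: "trajectory f X" and Y: "trajectory f Y" and init: "\<forall>a\<in>M. Bt (X 0) a \<le> Bt (Y 0) a"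
    and "0 \<le> T" and "a \<in> M"
  define C where "C = convex hull (X ` {0..T} \<union> Y ` {0..T})"
  have "compact C"
    unfolding C_def using trajectory_continuous_on[OF X] trajectory_continuous_on[OF Y]
    by (intro compact_convex_hull compact_Un compact_continuous_image) (auto elim: continuous_on_subset)
  then obtain K where K: "\<And>\<xi> b. \<xi> \<in> C \<Longrightarrow> b \<in> M \<Longrightarrow> Bt (J \<xi> *v d) b < K * Bt d b"
    using continuous_on_subset[OF C1] d by (rule compact_edge_rate_bound) auto
  have segment: "closed_segment (Y t) (X t) \<subseteq> C" if "t \<in> {0..T}" for t
    unfolding C_def using that by (intro closed_segment_subset convex_convex_hull) (auto intro: hull_inc)
  have bound: "Bt (X T) a - Bt (Y T) a < \<epsilon> * exp (K * T) * Bt d a" if "0 < \<epsilon>" for \<epsilon>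
  proof (rule edge_difference_bound[OF deriv metz X Y, where r' = "\<lambda>t. \<epsilon> * exp (K * t) * K"])
    fix t \<xi> b assume "t \<in> {0..T}" "\<xi> \<in> closed_segment (Y t) (X t)" "b \<in> M"
    with K segment \<open>0 < \<epsilon>\<close> show "\<epsilon> * exp (K * t) * Bt (J \<xi> *v d) b < \<epsilon> * exp (K * t) * K * Bt d b"
      by (simp add: subset_iff)
  next
    fix b assume "b \<in> M"
    with init d[of b] \<open>0 < \<epsilon>\<close> have "Bt (X 0) b \<le> Bt (Y 0) b" "0 < \<epsilon> * Bt d b"
      by auto
    then show "Bt (X 0) b - Bt (Y 0) b < \<epsilon> * exp (K * 0) * Bt d b"
      by simp
  qed (use \<open>0 \<le> T\<close> \<open>a \<in> M\<close> in \<open>auto intro!: derivative_eq_intros\<close>)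
  have "((\<lambda>\<epsilon>. \<epsilon> * exp (K * T) * Bt d a) \<longlongrightarrow> 0 * exp (K * T) * Bt d a) (at_right 0)"
    by (intro tendsto_intros)
  from le_of_forall_less_at_right_0[OF this bound] show "Bt (X T) a \<le> Bt (Y T) a"
    by simp
qed

lemma edge_difference_decay:
  assumes deriv: "\<And>x. (f has_derivative (\<lambda>h. J x *v h)) (at x)"
    and metz: "\<And>x. edge_metzler M (J x)"
    and e: "\<And>a. a \<in> M \<Longrightarrow> 0 < Bt e a"
    and rate: "\<And>x a. a \<in> M \<Longrightarrow> Bt (J x *v e) a \<le> - c * Bt e a"
    and X: "trajectory f X" and Y: "trajectory f Y"
    and "0 \<le> D" and init: "\<And>b. b \<in> M \<Longrightarrow> Bt (X 0) b - Bt (Y 0) b \<le> D * Bt e b"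
    and "a \<in> M" "0 \<le> T"
  shows "Bt (X T) a - Bt (Y T) a \<le> D * exp (- c * T) * Bt e a"
proof -
  have bound: "Bt (X T) a - Bt (Y T) a < (D + \<epsilon>) * exp ((\<epsilon> - c) * T) * Bt e a" if "0 < \<epsilon>" for \<epsilon>
  proof (rule edge_difference_bound[OF deriv metz X Y,
        where r' = "\<lambda>t. (D + \<epsilon>) * exp ((\<epsilon> - c) * t) * (\<epsilon> - c)"])
    fix t \<xi> b assume "b \<in> M"
    define R where "R = (D + \<epsilon>) * exp ((\<epsilon> - c) * t)"
    have "0 < R" using \<open>0 \<le> D\<close> \<open>0 < \<epsilon>\<close> by (simp add: R_def)
    then have "R * Bt (J \<xi> *v e) b \<le> R * (- c * Bt e b)"
      using rate[OF \<open>b \<in> M\<close>, of \<xi>] by (intro mult_left_mono) auto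
    also have "\<dots> < R * (\<epsilon> - c) * Bt e b"
      using \<open>0 < R\<close> \<open>0 < \<epsilon>\<close> e[OF \<open>b \<in> M\<close>] by (simp add: algebra_simps)
    finally show "(D + \<epsilon>) * exp ((\<epsilon> - c) * t) * Bt (J \<xi> *v e) b
        < (D + \<epsilon>) * exp ((\<epsilon> - c) * t) * (\<epsilon> - c) * Bt e b"
      by (simp add: R_def)
  next
    fix b assume "b \<in> M"
    with init[of b] e[of b] \<open>0 < \<epsilon>\<close> have "Bt (X 0) b - Bt (Y 0) b \<le> D * Bt e b" "0 < \<epsilon> * Bt e b"
      by auto
    then show "Bt (X 0) b - Bt (Y 0) b < (D + \<epsilon>) * exp ((\<epsilon> - c) * 0) * Bt e b"
      by (simp add: distrib_right)
  qed (use \<open>a \<in> M\<close> \<open>0 \<le> T\<close> in \<open>auto intro!: derivative_eq_intros\<close>)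
  have "((\<lambda>\<epsilon>. (D + \<epsilon>) * exp ((\<epsilon> - c) * T) * Bt e a) \<longlongrightarrow> (D + 0) * exp ((0 - c) * T) * Bt e a)
      (at_right 0)"
    by (intro tendsto_intros)
  from le_of_forall_less_at_right_0[OF this bound] show ?thesis
    by simp
qed

lemma edge_contracting_if_rate:
  assumes deriv: "\<And>x. (f has_derivative (\<lambda>h. J x *v h)) (at x)"
    and metz: "\<And>x. edge_metzler M (J x)"
    and e: "\<And>a. a \<in> M \<Longrightarrow> 0 < Bt e a"
    and rate: "\<And>x a. a \<in> M \<Longrightarrow> Bt (J x *v e) a \<le> - c * Bt e a"
  shows "edge_contracting M e c f"
  unfolding edge_contracting_def
proof (intro allI impI)
  fix X Y and T :: real
  assume X: "trajectory f X" and Y: "trajectory f Y" and "0 \<le> T"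
  define D where "D = edge_dist M e (X 0) (Y 0)"
  have "0 \<le> D" unfolding D_def edge_dist_def by (simp add: infnorm_on_nonneg)
  have "\<bar>Bt (X 0) b - Bt (Y 0) b\<bar> \<le> D * Bt e b" if "b \<in> M" for b
    unfolding D_def using that e[OF that] by (rule edge_dist_bound)
  then have init: "Bt (X 0) b - Bt (Y 0) b \<le> D * Bt e b" "Bt (Y 0) b - Bt (X 0) b \<le> D * Bt e b"
    if "b \<in> M" for b
    using that by (auto simp: abs_le_iff)
  have "\<bar>Bt (X T) a - Bt (Y T) a\<bar> \<le> exp (- c * T) * D * Bt e a" if "a \<in> M" for a
  proof -
    have "Bt (X T) a - Bt (Y T) a \<le> D * exp (- c * T) * Bt e a"
      by (rule edge_difference_decay[OF deriv metz e rate X Y \<open>0 \<le> D\<close> init(1) that \<open>0 \<le> T\<close>])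
    moreover have "Bt (Y T) a - Bt (X T) a \<le> D * exp (- c * T) * Bt e a"
      by (rule edge_difference_decay[OF deriv metz e rate Y X \<open>0 \<le> D\<close> init(2) that \<open>0 \<le> T\<close>])
    ultimately show ?thesis by (simp add: abs_le_iff mult_ac)
  qed
  with e \<open>0 \<le> D\<close> show "edge_dist M e (X T) (Y T) \<le> exp (- c * T) * D"
    by (intro edge_dist_le) auto
qed

lemma edge_rate_le_at_0:
  assumes X: "trajectory f X" and Y: "trajectory f Y"
    and \<phi>: "(\<phi> has_real_derivative \<phi>') (at 0 within {0..})"
    and start: "Bt (X 0) a - Bt (Y 0) a = \<phi> 0"
    and below: "\<And>t. 0 < t \<Longrightarrow> Bt (X t) a - Bt (Y t) a \<le> \<phi> t"
  shows "Bt (f (X 0)) a - Bt (f (Y 0)) a \<le> \<phi>'"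
proof -
  have "((\<lambda>t. \<phi> t - (Bt (X t) a - Bt (Y t) a)) has_real_derivative \<phi>' - (Bt (f (X 0)) a - Bt (f (Y 0)) a))
      (at 0 within {0..})"
    by (intro derivative_eq_intros)
      (auto intro: \<phi> trajectory_Bt_derivative[OF X] trajectory_Bt_derivative[OF Y])
  then have "0 \<le> \<phi>' - (Bt (f (X 0)) a - Bt (f (Y 0)) a)"
    by (rule DERIV_nonneg_at_left_min) (use start below in auto)
  then show ?thesis by simp
qed

lemma edge_metzler_if_edge_monotone:
  assumes deriv: "\<And>x. (f has_derivative (\<lambda>h. J x *v h)) (at x)"
    and global: "\<And>x0. \<exists>x. trajectory f x \<and> x 0 = x0"
    and mono: "edge_monotone M f"
  shows "edge_metzler M (J x)"
proof (rule edge_metzlerI)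
  fix a w assume a: "a \<in> M" and w: "\<forall>b\<in>M. 0 \<le> Bt w b" and "Bt w a = 0"
  have "Bt (f x) a \<le> Bt (f (x + h *\<^sub>R w)) a" if "0 < h" for h
  proof -
    obtain X where X: "trajectory f X" "X 0 = x" using global by blast
    obtain Y where Y: "trajectory f Y" "Y 0 = x + h *\<^sub>R w" using global by blast
    have "\<forall>b\<in>M. Bt (X 0) b \<le> Bt (Y 0) b"
      using X Y w \<open>0 < h\<close> by (simp add: Bt_add Bt_scaleR)
    with mono X Y have "\<forall>t\<ge>0. \<forall>b\<in>M. Bt (X t) b \<le> Bt (Y t) b"
      unfolding edge_monotone_def by blast
    then have "Bt (f (X 0)) a - Bt (f (Y 0)) a \<le> 0"
      by (intro edge_rate_le_at_0[OF X(1) Y(1), where \<phi> = "\<lambda>_. 0"])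
        (use X Y \<open>Bt w a = 0\<close> a in \<open>auto simp: Bt_add Bt_scaleR\<close>)
    with X Y show ?thesis by simp
  qed
  with Bt_has_derivative_along_line[OF deriv, of x w a 0 "{0..}"] show "0 \<le> Bt (J x *v w) a"
    by (intro DERIV_nonneg_at_left_min) auto
qed

lemma rate_if_edge_contracting:
  assumes deriv: "\<And>x. (f has_derivative (\<lambda>h. J x *v h)) (at x)"
    and global: "\<And>x0. \<exists>x. trajectory f x \<and> x 0 = x0"
    and e: "\<And>a. a \<in> M \<Longrightarrow> 0 < Bt e a"
    and contr: "edge_contracting M e c f" and a: "a \<in> M"
  shows "Bt (J x *v e) a \<le> - c * Bt e a"
proof -
  have step: "Bt (f (x + h *\<^sub>R e)) a - Bt (f x) a \<le> - c * h * Bt e a" if "0 < h" for h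
  proof -
    obtain X where X: "trajectory f X" "X 0 = x + h *\<^sub>R e" using global by blast
    obtain Y where Y: "trajectory f Y" "Y 0 = x" using global by blast
    have "edge_dist M e (X 0) (Y 0) \<le> h"
    proof (rule edge_dist_le)
      fix b assume "b \<in> M"
      with e[of b] \<open>0 < h\<close> X Y show "\<bar>Bt (X 0) b - Bt (Y 0) b\<bar> \<le> h * Bt e b"
        by (simp add: Bt_add Bt_scaleR)
    qed (use e \<open>0 < h\<close> in auto)
    have "Bt (X t) a - Bt (Y t) a \<le> h * exp (- c * t) * Bt e a" if "0 < t" for t
    proof -
      have "Bt (X t) a - Bt (Y t) a \<le> edge_dist M e (X t) (Y t) * Bt e a"
        using edge_dist_bound[OF a e[OF a]] by (rule abs_le_D1)
      also have "\<dots> \<le> exp (- c * t) * edge_dist M e (X 0) (Y 0) * Bt e a"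
        using contr X(1) Y(1) \<open>0 < t\<close> e[OF a] unfolding edge_contracting_def
        by (intro mult_right_mono) auto
      also have "\<dots> \<le> h * exp (- c * t) * Bt e a"
        using \<open>edge_dist M e (X 0) (Y 0) \<le> h\<close> e[OF a] by (simp add: mult_ac)
      finally show ?thesis .
    qed
    then have "Bt (f (X 0)) a - Bt (f (Y 0)) a \<le> - c * h * Bt e a"
      by (intro edge_rate_le_at_0[OF X(1) Y(1), where \<phi> = "\<lambda>t. h * exp (- c * t) * Bt e a"])
        (use X Y in \<open>auto intro!: derivative_eq_intros simp: Bt_add Bt_scaleR\<close>)
    with X Y show ?thesis by simp
  qed
  have "((\<lambda>h. - c * h * Bt e a - Bt (f (x + h *\<^sub>R e)) a) has_real_derivative
      - c * Bt e a - Bt (J (x + 0 *\<^sub>R e) *v e) a) (at 0 within {0..})"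
    by (auto intro!: derivative_eq_intros Bt_has_derivative_along_line[OF deriv])
  then have "0 \<le> - c * Bt e a - Bt (J (x + 0 *\<^sub>R e) *v e) a"
  proof (rule DERIV_nonneg_at_left_min)
    fix h :: real assume "0 < h"
    with step[OF this]
    show "- c * 0 * Bt e a - Bt (f (x + 0 *\<^sub>R e)) a \<le> - c * h * Bt e a - Bt (f (x + h *\<^sub>R e)) a"
      by simp
  qed
  then show ?thesis by simp
qed

theorem theorem4:
  fixes E :: "('n::finite \<times> 'n) set"
    and f :: "real ^ 'n \<Rightarrow> real ^ 'n"
    and J :: "real ^ 'n \<Rightarrow> real ^ 'n ^ 'n"
    and v :: "real ^ 'n"
  assumes graph: "undirected_graph E" and conn: "connected_graph E"
    and deriv: "\<And>x. (f has_derivative (\<lambda>h. J x *v h)) (at x)"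
    and C1: "continuous_on UNIV J"
    and global: "\<And>x0. \<exists>x. trajectory f x \<and> x 0 = x0"
    and shift: "\<And>x c. f (x + c *\<^sub>R (\<chi> i. 1)) = f x"
    and v: "v \<in> I_E E"
  shows
   "((\<forall>x. \<exists>P. metzler_on (oriented_edges E v) P \<and>
        (\<forall>a\<in>oriented_edges E v. \<forall>k.
           (\<Sum>i\<in>UNIV. incidence i a * J x $ i $ k)
             = (\<Sum>b\<in>oriented_edges E v. P a b * incidence k b)))
     \<longleftrightarrow>
     (\<forall>x y. trajectory f x \<longrightarrow> trajectory f y \<longrightarrow>
        (\<forall>a\<in>oriented_edges E v. Bt (x 0) a \<le> Bt (y 0) a) \<longrightarrow>
        (\<forall>t\<ge>0. \<forall>a\<in>oriented_edges E v. Bt (x t) a \<le> Bt (y t) a)))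
    \<and>
    ((\<forall>x. \<exists>P. metzler_on (oriented_edges E v) P \<and>
        (\<forall>a\<in>oriented_edges E v. \<forall>k.
           (\<Sum>i\<in>UNIV. incidence i a * J x $ i $ k)
             = (\<Sum>b\<in>oriented_edges E v. P a b * incidence k b)))
     \<longrightarrow>
     (\<forall>(c::real) (e::real ^ 'n). (\<forall>a\<in>oriented_edges E v. Bt e a > 0) \<longrightarrow>
        ((\<forall>x. \<forall>a\<in>oriented_edges E v. Bt (J x *v e) a \<le> - c * Bt e a)
         \<longleftrightarrow>
         (\<forall>x y. trajectory f x \<longrightarrow> trajectory f y \<longrightarrow>
            (\<forall>t\<ge>0. infnorm_on (oriented_edges E v) (\<lambda>a. (Bt (x t) a - Bt (y t) a) / Bt e a)
                   \<le> exp (- c * t) *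
                     infnorm_on (oriented_edges E v) (\<lambda>a. (Bt (x 0) a - Bt (y 0) a) / Bt e a))))))"
proof -
  let ?M = "oriented_edges E v"
  have v_pos: "\<And>a. a \<in> ?M \<Longrightarrow> 0 < Bt v a"
    by (rule Bt_oriented_edges_pos)
  have monotone: "(\<forall>x. edge_metzler ?M (J x)) \<longleftrightarrow> edge_monotone ?M f"
    using edge_monotone_if_edge_metzler[OF deriv C1 v_pos] edge_metzler_if_edge_monotone[OF deriv global]
    by blast
  have contracting: "(\<forall>x. \<forall>a\<in>?M. Bt (J x *v e) a \<le> - c * Bt e a) \<longleftrightarrow> edge_contracting ?M e c f"
    if "\<forall>x. edge_metzler ?M (J x)" "\<forall>a\<in>?M. 0 < Bt e a" for c e
    using that edge_contracting_if_rate[OF deriv] rate_if_edge_contracting[OF deriv global] by blast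
  show ?thesis
    unfolding edge_metzler_def[symmetric] edge_monotone_def[symmetric] edge_dist_def[symmetric]
      edge_contracting_def[symmetric]
    using monotone contracting by blast
qed

end
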